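(* Let $X$ be a scalable monoid over a ring $R$. The relation $\sim$ on $X$ is a congruence with respect to the operations $(x,y)\mapsto xy$ and $(\lambda,x)\mapsto\lambda\cdot x$; that is, if $x\sim x'$ and $y\sim y'$ then $xy\sim x'y'$, and if $x\sim x'$ then $\lambda\cdot x\sim\lambda\cdot x'$ for every $\lambda\in R$.
   Context: A scalable monoid over a (unital, associative, not necessarily commutative) ring $R$ is a monoid $X$ (identity $1_X$, product written $xy$) together with a map $R\times X\to X$, $(\alpha,x)\mapsto\alpha\cdot x$, such that $1\cdot x=x$, $\alpha\cdot(\beta\cdot x)=\alpha\beta\cdot x$ and $\alpha\cdot(xy)=(\alpha\cdot x)y=x(\alpha\cdot y)$ for all $\alpha,\beta\in R$, $x,y\in X$. The relation $\sim$ on $X$ is defined by $x\sim y$ iff $\alpha\cdot x=\beta\cdot y$ for some $\alpha,\beta\in R$; it is an equivalence relation. *)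

theory Defs
  imports Main
begin

definition scalable_monoid :: "('r::ring_1 \<Rightarrow> 'x::monoid_mult \<Rightarrow> 'x) \<Rightarrow> bool" where
  "scalable_monoid sc \<longleftrightarrow>
     (\<forall>x. sc 1 x = x) \<and>
     (\<forall>a b x. sc a (sc b x) = sc (a * b) x) \<and>
     (\<forall>a x y. sc a (x * y) = (sc a x) * y \<and> sc a (x * y) = x * (sc a y))"

definition sm_sim :: "('r::ring_1 \<Rightarrow> 'x::monoid_mult \<Rightarrow> 'x) \<Rightarrow> 'x \<Rightarrow> 'x \<Rightarrow> bool" where
  "sm_sim sc x y \<longleftrightarrow> (\<exists>a b. sc a x = sc b y)"

end

theory Submission
  imports Defs
begin

text \<open>Scaling can be moved freely through products, so a product of scaled elements is a
  scaled product, and any two scalings commute. If \<open>a \<cdot> x = b \<cdot> x'\<close> and \<open>c \<cdot> y = d \<cdot> y'\<close>, then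
  \<open>ac \<cdot> xy = (a \<cdot> x)(c \<cdot> y) = (b \<cdot> x')(d \<cdot> y') = bd \<cdot> x'y'\<close>; and
  \<open>a \<cdot> (\<lambda> \<cdot> x) = \<lambda> \<cdot> (a \<cdot> x) = \<lambda> \<cdot> (b \<cdot> x') = b \<cdot> (\<lambda> \<cdot> x')\<close>, although \<open>R\<close> need not be commutative.\<close>

lemma scalable_monoid_scale_scale:
  assumes "scalable_monoid sc"
  shows "sc a (sc b x) = sc (a * b) x"
  using assms unfolding scalable_monoid_def by blast

lemma scalable_monoid_scale_mult_left:
  assumes "scalable_monoid sc"
  shows "sc a (x * y) = sc a x * y"
  using assms unfolding scalable_monoid_def by blast

lemma scalable_monoid_scale_mult_right:
  assumes "scalable_monoid sc"
  shows "sc a (x * y) = x * sc a y"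
  using assms unfolding scalable_monoid_def by blast

lemma scalable_monoid_mult_scale_scale:
  assumes "scalable_monoid sc"
  shows "sc a x * sc b y = sc (a * b) (x * y)"
proof -
  have "sc a x * sc b y = sc a (x * sc b y)"
    using scalable_monoid_scale_mult_left[OF assms] by simp
  also have "\<dots> = sc a (sc b (x * y))"
    using scalable_monoid_scale_mult_right[OF assms] by simp
  finally show ?thesis
    using scalable_monoid_scale_scale[OF assms] by simp
qed

lemma scalable_monoid_scale_commute:
  assumes "scalable_monoid sc"
  shows "sc a (sc b x) = sc b (sc a x)"
proof -
  have "sc a (sc b x) = sc a (x * sc b 1)"
    using scalable_monoid_scale_mult_right[OF assms, of b x 1] by simp
  also have "\<dots> = sc a x * sc b 1"
    using scalable_monoid_scale_mult_left[OF assms] by simp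
  also have "\<dots> = sc b (sc a x)"
    using scalable_monoid_scale_mult_right[OF assms, of b "sc a x" 1] by simp
  finally show ?thesis .
qed

lemma sm_sim_mult:
  assumes "scalable_monoid sc" "sm_sim sc x x'" "sm_sim sc y y'"
  shows "sm_sim sc (x * y) (x' * y')"
proof -
  obtain a b where ab: "sc a x = sc b x'"
    using assms(2) unfolding sm_sim_def by blast
  obtain c d where cd: "sc c y = sc d y'"
    using assms(3) unfolding sm_sim_def by blast
  have "sc (a * c) (x * y) = sc (b * d) (x' * y')"
    using ab cd scalable_monoid_mult_scale_scale[OF assms(1)] by metis
  then show ?thesis
    unfolding sm_sim_def by blast
qed

lemma sm_sim_scale:
  assumes "scalable_monoid sc" "sm_sim sc x x'"
  shows "sm_sim sc (sc l x) (sc l x')"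
proof -
  obtain a b where ab: "sc a x = sc b x'"
    using assms(2) unfolding sm_sim_def by blast
  have "sc a (sc l x) = sc b (sc l x')"
    using ab scalable_monoid_scale_commute[OF assms(1)] by metis
  then show ?thesis
    unfolding sm_sim_def by blast
qed

theorem proposition2p13:
  fixes sc :: "'r::ring_1 \<Rightarrow> 'x::monoid_mult \<Rightarrow> 'x"
  assumes "scalable_monoid sc"
  shows "(\<forall>x x' y y'. sm_sim sc x x' \<longrightarrow> sm_sim sc y y' \<longrightarrow> sm_sim sc (x * y) (x' * y')) \<and>
         (\<forall>(l::'r) x x'. sm_sim sc x x' \<longrightarrow> sm_sim sc (sc l x) (sc l x'))"
  using sm_sim_mult[OF assms] sm_sim_scale[OF assms] by blast

end
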